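(* There exists an imprecise copula $(A,B)$ on $[0,1]^2$ such that there is no copula $C$ with $A\le C\le B$.
   Context: A copula is $C:[0,1]^2\to\mathbb{R}$ that is grounded ($C(x,0)=C(0,y)=0$), has neutral element $1$ ($C(x,1)=x$, $C(1,y)=y$), and satisfies $C(s_1,t_1)+C(s_2,t_2)-C(s_2,t_1)-C(s_1,t_2)\ge0$ for all $s_1\le s_2$, $t_1\le t_2$. An imprecise copula is a pair $(A,B)$ of functions $[0,1]^2\to\mathbb{R}$, both grounded with neutral element $1$, such that for every rectangle with southwest, southeast, northeast, northwest corners $\mathbf{a},\mathbf{b},\mathbf{c},\mathbf{d}$: $A(\mathbf{a})+B(\mathbf{c})-A(\mathbf{b})-A(\mathbf{d})\ge0$, $B(\mathbf{a})+A(\mathbf{c})-A(\mathbf{b})-A(\mathbf{d})\ge0$, $B(\mathbf{a})+B(\mathbf{c})-B(\mathbf{b})-A(\mathbf{d})\ge0$, $B(\mathbf{a})+B(\mathbf{c})-A(\mathbf{b})-B(\mathbf{d})\ge0$. *)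

theory Defs
  imports Complex_Main
begin

text \<open>Functions on the unit square are modelled as real \<Rightarrow> real \<Rightarrow> real;
  all conditions only concern arguments in [0,1].\<close>

definition grounded :: "(real \<Rightarrow> real \<Rightarrow> real) \<Rightarrow> bool" where
  "grounded C \<longleftrightarrow> (\<forall>x\<in>{0..1}. C x 0 = 0 \<and> C 0 x = 0)"

definition neutral_one :: "(real \<Rightarrow> real \<Rightarrow> real) \<Rightarrow> bool" where
  "neutral_one C \<longleftrightarrow> (\<forall>x\<in>{0..1}. C x 1 = x \<and> C 1 x = x)"

definition copula :: "(real \<Rightarrow> real \<Rightarrow> real) \<Rightarrow> bool" where
  "copula C \<longleftrightarrow> grounded C \<and> neutral_one C \<and>
     (\<forall>s1 s2 t1 t2. 0 \<le> s1 \<and> s1 \<le> s2 \<and> s2 \<le> 1 \<and> 0 \<le> t1 \<and> t1 \<le> t2 \<and> t2 \<le> 1 \<longrightarrow>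
        C s1 t1 + C s2 t2 - C s2 t1 - C s1 t2 \<ge> 0)"

text \<open>Rectangle [s1,s2] x [t1,t2]: a = (s1,t1) SW, b = (s2,t1) SE, c = (s2,t2) NE, d = (s1,t2) NW.\<close>

definition imprecise_copula :: "(real \<Rightarrow> real \<Rightarrow> real) \<Rightarrow> (real \<Rightarrow> real \<Rightarrow> real) \<Rightarrow> bool" where
  "imprecise_copula A B \<longleftrightarrow> grounded A \<and> neutral_one A \<and> grounded B \<and> neutral_one B \<and>
     (\<forall>s1 s2 t1 t2. 0 \<le> s1 \<and> s1 \<le> s2 \<and> s2 \<le> 1 \<and> 0 \<le> t1 \<and> t1 \<le> t2 \<and> t2 \<le> 1 \<longrightarrow>
        A s1 t1 + B s2 t2 - A s2 t1 - A s1 t2 \<ge> 0 \<and>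
        B s1 t1 + A s2 t2 - A s2 t1 - A s1 t2 \<ge> 0 \<and>
        B s1 t1 + B s2 t2 - B s2 t1 - A s1 t2 \<ge> 0 \<and>
        B s1 t1 + B s2 t2 - A s2 t1 - B s1 t2 \<ge> 0)"

end

theory Submission
  imports Defs
begin

text \<open>The pair \<open>(A, B)\<close> is the bilinear interpolation of two tables of values on the grid
  \<open>0 < 0.40 < 0.42 < \<dots> < 0.50 < 1\<close>. Both interpolants are affine in each variable between
  consecutive grid points, hence so is every expression in the four rectangle inequalities, seen as
  a function of one corner coordinate; such a function is nonnegative as soon as it is nonnegative
  at the grid points and at the ends of its range, so the inequalities reduce to finitely many
  checks on the tables.

  A copula \<open>C\<close> with \<open>A \<le> C \<le> B\<close> would give the square \<open>[x\<^sub>1, x\<^sub>6]\<^sup>2\<close> at least the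
  \<open>C\<close>-volume of the two disjoint blocks \<open>[x\<^sub>2, x\<^sub>3]\<^sup>2\<close> and \<open>[x\<^sub>4, x\<^sub>5]\<^sup>2\<close>. Bounding \<open>C\<close> by
  \<open>A\<close> and \<open>B\<close> at the corners, each block has volume at least \<open>1/100\<close> while the square has
  volume at most \<open>1/100\<close>.\<close>

definition piecewise_affine :: "real set \<Rightarrow> (real \<Rightarrow> real) \<Rightarrow> bool" where
  "piecewise_affine K f \<longleftrightarrow> (\<forall>a b s. a < b \<longrightarrow> K \<inter> {a<..<b} = {} \<longrightarrow> a \<le> s \<longrightarrow> s \<le> b \<longrightarrow>
      f s * (b - a) = f a * (b - s) + f b * (s - a))"

lemma piecewise_affineD:
  "piecewise_affine K f \<Longrightarrow> a < b \<Longrightarrow> K \<inter> {a<..<b} = {} \<Longrightarrow> a \<le> s \<Longrightarrow> s \<le> b \<Longrightarrow>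
    f s * (b - a) = f a * (b - s) + f b * (s - a)"
  unfolding piecewise_affine_def by blast

lemma piecewise_affine_const: "piecewise_affine K (\<lambda>s. c)"
  unfolding piecewise_affine_def by (simp add: algebra_simps)

lemma piecewise_affine_add:
  "piecewise_affine K f \<Longrightarrow> piecewise_affine K g \<Longrightarrow> piecewise_affine K (\<lambda>s. f s + g s)"
  unfolding piecewise_affine_def by (simp add: distrib_right)

lemma piecewise_affine_diff:
  "piecewise_affine K f \<Longrightarrow> piecewise_affine K g \<Longrightarrow> piecewise_affine K (\<lambda>s. f s - g s)"
  unfolding piecewise_affine_def by (simp add: left_diff_distrib)

lemma piecewise_affine_scale:
  "piecewise_affine K f \<Longrightarrow> piecewise_affine K (\<lambda>s. c * f s)"
  unfolding piecewise_affine_def by (metis (no_types, lifting) mult.assoc distrib_left)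

lemma piecewise_affine_scale_right:
  "piecewise_affine K f \<Longrightarrow> piecewise_affine K (\<lambda>s. f s * c)"
  using piecewise_affine_scale[of K f c] by (simp add: mult.commute)

lemma piecewise_affine_sum:
  "finite I \<Longrightarrow> (\<And>i. i \<in> I \<Longrightarrow> piecewise_affine K (f i)) \<Longrightarrow> piecewise_affine K (\<lambda>s. \<Sum>i\<in>I. f i s)"
  by (induction I rule: finite_induct) (auto intro: piecewise_affine_const piecewise_affine_add)

text \<open>Between the nearest knots (or interval ends) around \<open>s\<close>, \<open>f s\<close> is a convex combination of
  two nonnegative values.\<close>
lemma piecewise_affine_nonneg:
  assumes f: "piecewise_affine K f" and K: "finite K"
    and lo: "0 \<le> f lo" and hi: "0 \<le> f hi"
    and knots: "\<And>k. k \<in> K \<Longrightarrow> lo \<le> k \<Longrightarrow> k \<le> hi \<Longrightarrow> 0 \<le> f k"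
    and s: "lo \<le> s" "s \<le> hi"
  shows "0 \<le> f s"
proof -
  define G1 where "G1 = insert lo {k\<in>K. lo \<le> k \<and> k \<le> s}"
  define G2 where "G2 = insert hi {k\<in>K. s \<le> k \<and> k \<le> hi}"
  have fin: "finite G1" "finite G2" using K unfolding G1_def G2_def by auto
  define a where "a = Max G1"
  define b where "b = Min G2"
  have "a \<in> G1" unfolding a_def by (rule Max_in[OF fin(1)]) (simp add: G1_def)
  have "b \<in> G2" unfolding b_def by (rule Min_in[OF fin(2)]) (simp add: G2_def)
  have a_ge: "x \<le> a" if "x \<in> G1" for x unfolding a_def using fin(1) that by simp
  have b_le: "b \<le> x" if "x \<in> G2" for x unfolding b_def using fin(2) that by simp
  have "lo \<le> a" "b \<le> hi" using a_ge b_le by (simp_all add: G1_def G2_def)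
  have "a \<le> s" "s \<le> b" using \<open>a \<in> G1\<close> \<open>b \<in> G2\<close> s by (auto simp: G1_def G2_def)
  have fa: "0 \<le> f a" using \<open>a \<in> G1\<close> lo knots s by (auto simp: G1_def)
  have fb: "0 \<le> f b" using \<open>b \<in> G2\<close> hi knots s by (auto simp: G2_def)
  show ?thesis
  proof (cases "a < b")
    case False
    then show ?thesis using fa \<open>a \<le> s\<close> \<open>s \<le> b\<close> by (metis antisym not_less order.trans)
  next
    case True
    have "K \<inter> {a<..<b} = {}"
    proof (rule ccontr)
      assume "K \<inter> {a<..<b} \<noteq> {}"
      then obtain k where k: "k \<in> K" "a < k" "k < b" by auto
      show False
      proof (cases "k \<le> s")
        case True
        then have "k \<in> G1" using k \<open>lo \<le> a\<close> by (simp add: G1_def)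
        then show False using a_ge k by fastforce
      next
        case False
        then have "k \<in> G2" using k \<open>b \<le> hi\<close> by (simp add: G2_def)
        then show False using b_le k by fastforce
      qed
    qed
    then have "f s * (b - a) = f a * (b - s) + f b * (s - a)"
      using piecewise_affineD[OF f True] \<open>a \<le> s\<close> \<open>s \<le> b\<close> by blast
    also have "\<dots> \<ge> 0" using fa fb \<open>a \<le> s\<close> \<open>s \<le> b\<close> by simp
    finally show ?thesis using True by (simp add: zero_le_mult_iff)
  qed
qed

lemma piecewise_biaffine_nonneg:
  assumes K: "finite K" "0 \<in> K" "1 \<in> K"
    and aff: "\<And>t. piecewise_affine K (\<lambda>s. f s t)" "\<And>s. piecewise_affine K (\<lambda>t. f s t)"
    and knots: "\<And>k l. k \<in> K \<Longrightarrow> l \<in> K \<Longrightarrow> 0 \<le> k \<Longrightarrow> k \<le> 1 \<Longrightarrow> 0 \<le> l \<Longrightarrow> l \<le> 1 \<Longrightarrow> 0 \<le> f k l"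
    and st: "0 \<le> s" "s \<le> 1" "0 \<le> t" "t \<le> 1"
  shows "0 \<le> f s t"
proof -
  have on_knots: "0 \<le> f s l" if "l \<in> K" "0 \<le> l" "l \<le> 1" for l
    by (rule piecewise_affine_nonneg[OF aff(1) K(1), where lo = 0 and hi = 1]) (use K knots that st in auto)
  show ?thesis
    by (rule piecewise_affine_nonneg[OF aff(2) K(1), where lo = 0 and hi = 1]) (use K on_knots st in auto)
qed

text \<open>The variables are released one at a time. Once \<open>s\<^sub>1\<close> is arbitrary, the range \<open>[s\<^sub>1, 1]\<close>
  of \<open>s\<^sub>2\<close> has an end that is no knot, and nonnegativity there is the degenerate case
  \<open>s\<^sub>2 = s\<^sub>1\<close>; likewise for \<open>t\<^sub>2\<close>.\<close>
lemma piecewise_multiaffine_nonneg: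
  fixes E :: "real \<Rightarrow> real \<Rightarrow> real \<Rightarrow> real \<Rightarrow> real"
  assumes K: "finite K" "0 \<in> K" "1 \<in> K"
    and aff: "\<And>s2 t1 t2. piecewise_affine K (\<lambda>s. E s s2 t1 t2)"
      "\<And>s1 t1 t2. piecewise_affine K (\<lambda>s. E s1 s t1 t2)"
      "\<And>s1 s2 t2. piecewise_affine K (\<lambda>t. E s1 s2 t t2)"
      "\<And>s1 s2 t1. piecewise_affine K (\<lambda>t. E s1 s2 t1 t)"
    and flat_s: "\<And>s t1 t2. 0 \<le> s \<Longrightarrow> s \<le> 1 \<Longrightarrow> 0 \<le> t1 \<Longrightarrow> t1 \<le> t2 \<Longrightarrow> t2 \<le> 1 \<Longrightarrow> 0 \<le> E s s t1 t2"
    and flat_t: "\<And>s1 s2 t. 0 \<le> s1 \<Longrightarrow> s1 \<le> s2 \<Longrightarrow> s2 \<le> 1 \<Longrightarrow> 0 \<le> t \<Longrightarrow> t \<le> 1 \<Longrightarrow> 0 \<le> E s1 s2 t t"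
    and knots: "\<And>a b c d. a \<in> K \<Longrightarrow> b \<in> K \<Longrightarrow> c \<in> K \<Longrightarrow> d \<in> K \<Longrightarrow>
      0 \<le> a \<Longrightarrow> a \<le> b \<Longrightarrow> b \<le> 1 \<Longrightarrow> 0 \<le> c \<Longrightarrow> c \<le> d \<Longrightarrow> d \<le> 1 \<Longrightarrow> 0 \<le> E a b c d"
    and rect: "0 \<le> s1" "s1 \<le> s2" "s2 \<le> 1" "0 \<le> t1" "t1 \<le> t2" "t2 \<le> 1"
  shows "0 \<le> E s1 s2 t1 t2"
proof -
  have step1: "0 \<le> E s1 b c d"
    if "b \<in> K" "c \<in> K" "d \<in> K" "0 \<le> s1" "s1 \<le> b" "b \<le> 1" "0 \<le> c" "c \<le> d" "d \<le> 1" for s1 b c d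
    by (rule piecewise_affine_nonneg[OF aff(1) K(1), where lo = 0 and hi = b]) (use K knots that in auto)
  have step2: "0 \<le> E s1 s2 c d"
    if "c \<in> K" "d \<in> K" "0 \<le> s1" "s1 \<le> s2" "s2 \<le> 1" "0 \<le> c" "c \<le> d" "d \<le> 1" for s1 s2 c d
    by (rule piecewise_affine_nonneg[OF aff(2) K(1), where lo = s1 and hi = 1]) (use K step1 flat_s that in auto)
  have step3: "0 \<le> E s1 s2 t1 d"
    if "d \<in> K" "0 \<le> s1" "s1 \<le> s2" "s2 \<le> 1" "0 \<le> t1" "t1 \<le> d" "d \<le> 1" for s1 s2 t1 d
    by (rule piecewise_affine_nonneg[OF aff(3) K(1), where lo = 0 and hi = d]) (use K step2 that in auto)
  show ?thesis
    by (rule piecewise_affine_nonneg[OF aff(4) K(1), where lo = t1 and hi = 1]) (use K step3 flat_t rect in auto)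
qed

definition volume :: "(real \<Rightarrow> real \<Rightarrow> real) \<Rightarrow> real \<Rightarrow> real \<Rightarrow> real \<Rightarrow> real \<Rightarrow> real" where
  "volume C s1 s2 t1 t2 = C s2 t2 - C s2 t1 - C s1 t2 + C s1 t1"

lemma copula_volume_nonneg:
  assumes "copula C" "0 \<le> s1" "s1 \<le> s2" "s2 \<le> 1" "0 \<le> t1" "t1 \<le> t2" "t2 \<le> 1"
  shows "0 \<le> volume C s1 s2 t1 t2"
proof -
  have "C s1 t1 + C s2 t2 - C s2 t1 - C s1 t2 \<ge> 0"
    using assms unfolding copula_def by blast
  then show ?thesis by (simp add: volume_def)
qed

text \<open>The square \<open>[a,f]\<^sup>2\<close> minus the two diagonal blocks \<open>[b,c]\<^sup>2\<close> and \<open>[d,e]\<^sup>2\<close> is the union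
  of seven rectangles of nonnegative volume.\<close>
lemma copula_volume_two_blocks:
  assumes "copula C" "0 \<le> a" "a \<le> b" "b \<le> c" "c \<le> d" "d \<le> e" "e \<le> f" "f \<le> 1"
  shows "volume C b c b c + volume C d e d e \<le> volume C a f a f"
proof -
  have "0 \<le> volume C a b a f" "0 \<le> volume C b c a b" "0 \<le> volume C b c c f"
    "0 \<le> volume C c d a f" "0 \<le> volume C d e a d" "0 \<le> volume C d e e f" "0 \<le> volume C e f a f"
    by (rule copula_volume_nonneg[OF assms(1)]; use assms in linarith)+
  then show ?thesis unfolding volume_def by linarith
qed

lemma copula_between_two_blocks:
  assumes "copula C" and between: "\<forall>x\<in>{0..1}. \<forall>y\<in>{0..1}. A x y \<le> C x y \<and> C x y \<le> B x y"
    and "0 \<le> a" "a \<le> b" "b \<le> c" "c \<le> d" "d \<le> e" "e \<le> f" "f \<le> 1"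
  shows "(A c c - B c b - B b c + A b b) + (A e e - B e d - B d e + A d d) \<le> B f f - A f a - A a f + B a a"
proof -
  have unit: "a \<in> {0..1}" "b \<in> {0..1}" "c \<in> {0..1}" "d \<in> {0..1}" "e \<in> {0..1}" "f \<in> {0..1}"
    using assms by auto
  have lower: "A x y \<le> C x y" and upper: "C x y \<le> B x y" if "x \<in> {0..1}" "y \<in> {0..1}" for x y
    using between that by auto
  show ?thesis
    using copula_volume_two_blocks[OF assms(1,3-)]
      lower[OF unit(3,3)] lower[OF unit(2,2)] lower[OF unit(5,5)] lower[OF unit(4,4)]
      lower[OF unit(6,1)] lower[OF unit(1,6)]
      upper[OF unit(3,2)] upper[OF unit(2,3)] upper[OF unit(5,4)] upper[OF unit(4,5)]
      upper[OF unit(6,6)] upper[OF unit(1,1)]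
    unfolding volume_def by linarith
qed

definition table_mass :: "(nat \<Rightarrow> nat \<Rightarrow> real) \<Rightarrow> nat \<Rightarrow> nat \<Rightarrow> real" where
  "table_mass T i j = T (Suc i) (Suc j) - T (Suc i) j - T i (Suc j) + T i j"

lemma sum_table_mass_row: "(\<Sum>j<l. table_mass T i j) = (T (Suc i) l - T i l) - (T (Suc i) 0 - T i 0)"
  using sum_lessThan_telescope[of "\<lambda>j. T (Suc i) j - T i j" l] by (simp add: table_mass_def algebra_simps)

lemma sum_table_mass_column: "(\<Sum>i<k. table_mass T i j) = (T k (Suc j) - T k j) - (T 0 (Suc j) - T 0 j)"
  using sum_lessThan_telescope[of "\<lambda>i. T i (Suc j) - T i j" k] by (simp add: table_mass_def algebra_simps)

lemma sum_table_mass: "(\<Sum>i<k. \<Sum>j<l. table_mass T i j) = T k l - T k 0 - T 0 l + T 0 0"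
  using sum_lessThan_telescope[of "\<lambda>i. T i l - T i 0" k] by (simp add: sum_table_mass_row algebra_simps)

lemma sum_lessThan_if_less: "(k::nat) \<le> n \<Longrightarrow> (\<Sum>i<n. if i < k then f i else 0) = (\<Sum>i<k. f i)"
proof -
  assume "k \<le> n"
  then have "{..<n} \<inter> {i. i < k} = {..<k}" by auto
  then show ?thesis using sum.inter_restrict[of "{..<n}" f "{i. i < k}"] by simp
qed

locale unit_grid =
  fixes x :: "nat \<Rightarrow> real" and n :: nat
  assumes x_less_Suc: "k < n \<Longrightarrow> x k < x (Suc k)"
    and x_0: "x 0 = 0" and x_n: "x n = 1"
begin

lemma x_less: "k < k' \<Longrightarrow> k' \<le> n \<Longrightarrow> x k < x k'"
proof (induction k' arbitrary: k)
  case (Suc k')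
  then have "x k \<le> x k'" by (cases "k = k'") (auto intro: less_imp_le)
  then show ?case using x_less_Suc[of k'] Suc.prems by simp
qed simp

lemma x_le_iff: "k \<le> n \<Longrightarrow> k' \<le> n \<Longrightarrow> x k \<le> x k' \<longleftrightarrow> k \<le> k'"
  by (metis le_less linorder_not_le x_less)

lemma x_in_unit: "k \<le> n \<Longrightarrow> 0 \<le> x k \<and> x k \<le> 1"
  using x_le_iff[of 0 k] x_le_iff[of k n] x_0 x_n by auto

definition knots :: "real set" where "knots = x ` {..n}"

lemma finite_knots: "finite knots" and zero_in_knots: "0 \<in> knots" and one_in_knots: "1 \<in> knots"
  unfolding knots_def using x_0 x_n by (auto intro: image_eqI[of _ x 0] image_eqI[of _ x n])

definition ramp :: "nat \<Rightarrow> real \<Rightarrow> real" where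
  "ramp i s = max 0 (min 1 ((s - x i) / (x (Suc i) - x i)))"

lemma ramp_knot: "i < n \<Longrightarrow> k \<le> n \<Longrightarrow> ramp i (x k) = (if i < k then 1 else 0)"
  using x_le_iff[of "Suc i" k] x_le_iff[of k i] x_less_Suc[of i]
  by (auto simp: ramp_def divide_simps not_less)

lemma ramp_0: "i < n \<Longrightarrow> ramp i 0 = 0" and ramp_1: "i < n \<Longrightarrow> ramp i 1 = 1"
  using ramp_knot[of i 0] ramp_knot[of i n] x_0 x_n by simp_all

lemma ramp_scaled: "i < n \<Longrightarrow> (x (Suc i) - x i) * ramp i s = max 0 (min (x (Suc i) - x i) (s - x i))"
  using x_less_Suc[of i] by (auto simp: ramp_def divide_simps max_def min_def)

lemma sum_ramp_scaled: "m \<le> n \<Longrightarrow> (\<Sum>i<m. (x (Suc i) - x i) * ramp i s) = max 0 (min (x m) s)"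
proof (induction m)
  case (Suc m)
  then show ?case
    using x_in_unit[of m] x_less_Suc[of m] ramp_scaled[of m s] by (simp add: max_def min_def)
qed (simp add: x_0)

lemma ramp_below: "i < n \<Longrightarrow> s \<le> x i \<Longrightarrow> ramp i s = 0"
  using x_less_Suc[of i] by (simp add: ramp_def divide_nonpos_pos)

lemma ramp_above: "i < n \<Longrightarrow> x (Suc i) \<le> s \<Longrightarrow> ramp i s = 1"
  using x_less_Suc[of i] by (simp add: ramp_def)

lemma ramp_between: "i < n \<Longrightarrow> x i \<le> s \<Longrightarrow> s \<le> x (Suc i) \<Longrightarrow> ramp i s = (s - x i) / (x (Suc i) - x i)"
  using x_less_Suc[of i] by (simp add: ramp_def)

lemma piecewise_affine_ramp: "i < n \<Longrightarrow> piecewise_affine knots (ramp i)"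
  unfolding piecewise_affine_def
proof (intro allI impI)
  fix a b s assume "i < n" "a < b" and gap: "knots \<inter> {a<..<b} = {}" and "a \<le> s" "s \<le> b"
  have "x i \<in> knots" "x (Suc i) \<in> knots" using \<open>i < n\<close> by (auto simp: knots_def)
  then have "x i \<notin> {a<..<b}" "x (Suc i) \<notin> {a<..<b}" using gap by blast+
  then consider "b \<le> x i" | "x (Suc i) \<le> a" | "x i \<le> a" "b \<le> x (Suc i)"
    using \<open>a < b\<close> by fastforce
  then show "ramp i s * (b - a) = ramp i a * (b - s) + ramp i b * (s - a)"
  proof cases
    case 1
    then show ?thesis using \<open>i < n\<close> \<open>a \<le> s\<close> \<open>s \<le> b\<close> \<open>a < b\<close> by (simp add: ramp_below)
  next
    case 2
    then show ?thesis using \<open>i < n\<close> \<open>a \<le> s\<close> \<open>s \<le> b\<close> by (simp add: ramp_above algebra_simps)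
  next
    case 3
    have "(s - x i) * (b - a) = (a - x i) * (b - s) + (b - x i) * (s - a)"
      by (simp add: algebra_simps)
    then have "(s - x i) / w * (b - a) = (a - x i) / w * (b - s) + (b - x i) / w * (s - a)" for w
      by (simp only: times_divide_eq_left add_divide_distrib[symmetric])
    then show ?thesis using 3 \<open>i < n\<close> \<open>a \<le> s\<close> \<open>s \<le> b\<close> by (simp add: ramp_between)
  qed
qed

text \<open>Spreading the mass of every table cell uniformly over the corresponding grid rectangle
  gives the bilinear interpolation of the table.\<close>
definition interp :: "(nat \<Rightarrow> nat \<Rightarrow> real) \<Rightarrow> real \<Rightarrow> real \<Rightarrow> real" where
  "interp T s t = (\<Sum>i<n. \<Sum>j<n. table_mass T i j * (ramp i s * ramp j t))"

lemma interp_knot: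
  assumes "k \<le> n" "l \<le> n"
  shows "interp T (x k) (x l) = T k l - T k 0 - T 0 l + T 0 0"
proof -
  have "interp T (x k) (x l) = (\<Sum>i<n. if i < k then (\<Sum>j<n. if j < l then table_mass T i j else 0) else 0)"
    unfolding interp_def using assms by (auto simp: ramp_knot intro!: sum.cong)
  also have "\<dots> = (\<Sum>i<k. \<Sum>j<l. table_mass T i j)"
    using assms by (simp add: sum_lessThan_if_less)
  finally show ?thesis by (simp add: sum_table_mass)
qed

definition grid_margins :: "(nat \<Rightarrow> nat \<Rightarrow> real) \<Rightarrow> bool" where
  "grid_margins T \<longleftrightarrow> (\<forall>k\<le>n. T k 0 = 0 \<and> T 0 k = 0 \<and> T k n = x k \<and> T n k = x k)"

lemma interp_knot_margins: "grid_margins T \<Longrightarrow> k \<le> n \<Longrightarrow> l \<le> n \<Longrightarrow> interp T (x k) (x l) = T k l"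
  by (simp add: interp_knot grid_margins_def)

lemma grounded_interp: "grounded (interp T)"
  unfolding grounded_def interp_def by (simp add: ramp_0)

lemma interp_right_1:
  assumes "grid_margins T" "0 \<le> s" "s \<le> 1"
  shows "interp T s 1 = s"
proof -
  have "interp T s 1 = (\<Sum>i<n. (\<Sum>j<n. table_mass T i j) * ramp i s)"
    unfolding interp_def by (simp add: ramp_1 sum_distrib_right)
  also have "\<dots> = (\<Sum>i<n. (x (Suc i) - x i) * ramp i s)"
    using assms(1) by (intro sum.cong) (auto simp: sum_table_mass_row grid_margins_def)
  finally show ?thesis using sum_ramp_scaled[of n s] assms x_n by simp
qed

lemma interp_left_1:
  assumes "grid_margins T" "0 \<le> t" "t \<le> 1"
  shows "interp T 1 t = t"
proof -
  have "interp T 1 t = (\<Sum>j<n. (\<Sum>i<n. table_mass T i j) * ramp j t)"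
    unfolding interp_def by (subst sum.swap) (simp add: ramp_1 sum_distrib_right)
  also have "\<dots> = (\<Sum>j<n. (x (Suc j) - x j) * ramp j t)"
    using assms(1) by (intro sum.cong) (auto simp: sum_table_mass_column grid_margins_def)
  finally show ?thesis using sum_ramp_scaled[of n t] assms x_n by simp
qed

lemma neutral_one_interp: "grid_margins T \<Longrightarrow> neutral_one (interp T)"
  unfolding neutral_one_def by (simp add: interp_left_1 interp_right_1)

lemma piecewise_affine_interp_left: "piecewise_affine knots (\<lambda>s. interp T s t)"
  unfolding interp_def
  by (intro piecewise_affine_sum finite_lessThan)
    (simp add: mult.assoc[symmetric] piecewise_affine_scale piecewise_affine_scale_right piecewise_affine_ramp)

lemma piecewise_affine_interp_right: "piecewise_affine knots (\<lambda>t. interp T s t)"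
  unfolding interp_def
  by (intro piecewise_affine_sum finite_lessThan)
    (simp add: mult.assoc[symmetric] piecewise_affine_scale piecewise_affine_ramp)

lemma interp_mono:
  assumes "grid_margins T" "grid_margins T'" and le: "\<forall>k\<le>n. \<forall>l\<le>n. T k l \<le> T' k l"
    and "0 \<le> s" "s \<le> 1" "0 \<le> t" "t \<le> 1"
  shows "interp T s t \<le> interp T' s t"
proof -
  have "0 \<le> interp T' s t - interp T s t"
  proof (rule piecewise_biaffine_nonneg[where f = "\<lambda>s t. interp T' s t - interp T s t",
        OF finite_knots zero_in_knots one_in_knots])
    show "piecewise_affine knots (\<lambda>s. interp T' s t - interp T s t)" for t
      by (intro piecewise_affine_diff piecewise_affine_interp_left)
    show "piecewise_affine knots (\<lambda>t. interp T' s t - interp T s t)" for s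
      by (intro piecewise_affine_diff piecewise_affine_interp_right)
    show "0 \<le> interp T' a b - interp T a b"
      if "a \<in> knots" "b \<in> knots" "0 \<le> a" "a \<le> 1" "0 \<le> b" "b \<le> 1" for a b
      using that assms(1,2) le by (auto simp: knots_def interp_knot_margins)
  qed (use assms in auto)
  then show ?thesis by simp
qed

lemma interp_mixed_volume_nonneg:
  assumes margins: "grid_margins T1" "grid_margins T2" "grid_margins T3" "grid_margins T4"
    and le: "\<forall>k\<le>n. \<forall>l\<le>n. T3 k l \<le> T1 k l" "\<forall>k\<le>n. \<forall>l\<le>n. T4 k l \<le> T2 k l"
      "\<forall>k\<le>n. \<forall>l\<le>n. T4 k l \<le> T1 k l" "\<forall>k\<le>n. \<forall>l\<le>n. T3 k l \<le> T2 k l"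
    and grid: "\<And>k1 k2 l1 l2. k1 \<le> k2 \<Longrightarrow> k2 \<le> n \<Longrightarrow> l1 \<le> l2 \<Longrightarrow> l2 \<le> n \<Longrightarrow>
      0 \<le> T1 k1 l1 + T2 k2 l2 - T3 k2 l1 - T4 k1 l2"
    and rect: "0 \<le> s1" "s1 \<le> s2" "s2 \<le> 1" "0 \<le> t1" "t1 \<le> t2" "t2 \<le> 1"
  shows "0 \<le> interp T1 s1 t1 + interp T2 s2 t2 - interp T3 s2 t1 - interp T4 s1 t2"
proof (rule piecewise_multiaffine_nonneg[OF finite_knots zero_in_knots one_in_knots _ _ _ _ _ _ _ rect])
  show "0 \<le> interp T1 s t1 + interp T2 s t2 - interp T3 s t1 - interp T4 s t2"
    if "0 \<le> s" "s \<le> 1" "0 \<le> t1" "t1 \<le> t2" "t2 \<le> 1" for s t1 t2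
    using interp_mono[OF margins(3,1) le(1), of s t1] interp_mono[OF margins(4,2) le(2), of s t2] that
    by simp
  show "0 \<le> interp T1 s1 t + interp T2 s2 t - interp T3 s2 t - interp T4 s1 t"
    if "0 \<le> s1" "s1 \<le> s2" "s2 \<le> 1" "0 \<le> t" "t \<le> 1" for s1 s2 t
    using interp_mono[OF margins(4,1) le(3), of s1 t] interp_mono[OF margins(3,2) le(4), of s2 t] that
    by simp
  show "0 \<le> interp T1 a c + interp T2 b d - interp T3 b c - interp T4 a d"
    if on_knots: "a \<in> knots" "b \<in> knots" "c \<in> knots" "d \<in> knots"
      and ordered: "0 \<le> a" "a \<le> b" "b \<le> 1" "0 \<le> c" "c \<le> d" "d \<le> 1" for a b c d
  proof -
    obtain k1 k2 l1 l2 where "k1 \<le> n" "k2 \<le> n" "l1 \<le> n" "l2 \<le> n"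
      and "a = x k1" "b = x k2" "c = x l1" "d = x l2"
      using on_knots by (auto simp: knots_def)
    then show ?thesis
      using grid[of k1 k2 l1 l2] ordered margins by (simp add: x_le_iff interp_knot_margins)
  qed
qed (intro piecewise_affine_add piecewise_affine_diff piecewise_affine_const
    piecewise_affine_interp_left piecewise_affine_interp_right)+

lemma imprecise_copula_interp:
  assumes margins: "grid_margins A" "grid_margins B" and le: "\<forall>k\<le>n. \<forall>l\<le>n. A k l \<le> B k l"
    and grid: "\<And>k1 k2 l1 l2. k1 \<le> k2 \<Longrightarrow> k2 \<le> n \<Longrightarrow> l1 \<le> l2 \<Longrightarrow> l2 \<le> n \<Longrightarrow>
      0 \<le> A k1 l1 + B k2 l2 - A k2 l1 - A k1 l2 \<and>
      0 \<le> B k1 l1 + A k2 l2 - A k2 l1 - A k1 l2 \<and>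
      0 \<le> B k1 l1 + B k2 l2 - B k2 l1 - A k1 l2 \<and>
      0 \<le> B k1 l1 + B k2 l2 - A k2 l1 - B k1 l2"
  shows "imprecise_copula (interp A) (interp B)"
proof -
  have refl: "\<forall>k\<le>n. \<forall>l\<le>n. T k l \<le> T k l" for T :: "nat \<Rightarrow> nat \<Rightarrow> real" by simp
  note grid' = grid[THEN conjunct1] grid[THEN conjunct2, THEN conjunct1]
    grid[THEN conjunct2, THEN conjunct2, THEN conjunct1] grid[THEN conjunct2, THEN conjunct2, THEN conjunct2]
  have "\<forall>s1 s2 t1 t2. 0 \<le> s1 \<and> s1 \<le> s2 \<and> s2 \<le> 1 \<and> 0 \<le> t1 \<and> t1 \<le> t2 \<and> t2 \<le> 1 \<longrightarrow>
      interp A s1 t1 + interp B s2 t2 - interp A s2 t1 - interp A s1 t2 \<ge> 0 \<and>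
      interp B s1 t1 + interp A s2 t2 - interp A s2 t1 - interp A s1 t2 \<ge> 0 \<and>
      interp B s1 t1 + interp B s2 t2 - interp B s2 t1 - interp A s1 t2 \<ge> 0 \<and>
      interp B s1 t1 + interp B s2 t2 - interp A s2 t1 - interp B s1 t2 \<ge> 0"
    by (intro allI impI conjI
        interp_mixed_volume_nonneg[OF margins(1,2,1,1) refl le refl le grid'(1)]
        interp_mixed_volume_nonneg[OF margins(2,1,1,1) le refl le refl grid'(2)]
        interp_mixed_volume_nonneg[OF margins(2,2,2,1) refl le le refl grid'(3)]
        interp_mixed_volume_nonneg[OF margins(2,2,1,2) le refl refl le grid'(4)]) simp_all
  then show ?thesis
    unfolding imprecise_copula_def by (intro conjI grounded_interp neutral_one_interp margins)
qed

end

definition knot_percent :: "int list" where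
  "knot_percent = [0, 40, 42, 44, 46, 48, 50, 100]"

definition lower_percent :: "int list list" where
  "lower_percent =
    [[0,  0,  0,  0,  0,  0,  0,   0],
     [0,  0,  1,  2,  3,  3,  4,  40],
     [0,  1,  2,  2,  3,  3,  4,  42],
     [0,  1,  2,  4,  4,  4,  5,  44],
     [0,  2,  2,  4,  5,  5,  5,  46],
     [0,  3,  3,  5,  5,  7,  7,  48],
     [0,  4,  4,  6,  6,  7,  7,  50],
     [0, 40, 42, 44, 46, 48, 50, 100]]"

definition upper_percent :: "int list list" where
  "upper_percent =
    [[0,  0,  0,  0,  0,  0,  0,   0],
     [0,  1,  2,  3,  4,  4,  5,  40],
     [0,  2,  2,  3,  4,  4,  5,  42],
     [0,  2,  2,  4,  5,  5,  6,  44],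
     [0,  3,  3,  5,  5,  5,  6,  46],
     [0,  4,  4,  6,  6,  7,  8,  48],
     [0,  5,  5,  7,  7,  8,  8,  50],
     [0, 40, 42, 44, 46, 48, 50, 100]]"

definition example_knot :: "nat \<Rightarrow> real" where "example_knot k = of_int (knot_percent ! k) / 100"
definition lower_table :: "nat \<Rightarrow> nat \<Rightarrow> real" where "lower_table k l = of_int (lower_percent ! k ! l) / 100"
definition upper_table :: "nat \<Rightarrow> nat \<Rightarrow> real" where "upper_table k l = of_int (upper_percent ! k ! l) / 100"

lemma knot_percent_increasing: "list_all (\<lambda>k. knot_percent ! k < knot_percent ! Suc k) [0..<7]"
  by code_simp

lemma percent_margins:
  "list_all (\<lambda>k. lower_percent ! k ! 0 = 0 \<and> lower_percent ! 0 ! k = 0 \<and>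
     lower_percent ! k ! 7 = knot_percent ! k \<and> lower_percent ! 7 ! k = knot_percent ! k \<and>
     upper_percent ! k ! 0 = 0 \<and> upper_percent ! 0 ! k = 0 \<and>
     upper_percent ! k ! 7 = knot_percent ! k \<and> upper_percent ! 7 ! k = knot_percent ! k) [0..<8]"
  by code_simp

lemma percent_lower_le_upper:
  "list_all (\<lambda>k. list_all (\<lambda>l. lower_percent ! k ! l \<le> upper_percent ! k ! l) [0..<8]) [0..<8]"
  by code_simp

lemma percent_rectangles:
  "list_all (\<lambda>k1. list_all (\<lambda>k2. list_all (\<lambda>l1. list_all (\<lambda>l2.
     let a = (\<lambda>k l. lower_percent ! k ! l); b = (\<lambda>k l. upper_percent ! k ! l) in
     0 \<le> a k1 l1 + b k2 l2 - a k2 l1 - a k1 l2 \<and>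
     0 \<le> b k1 l1 + a k2 l2 - a k2 l1 - a k1 l2 \<and>
     0 \<le> b k1 l1 + b k2 l2 - b k2 l1 - a k1 l2 \<and>
     0 \<le> b k1 l1 + b k2 l2 - a k2 l1 - b k1 l2) [l1..<8]) [0..<8]) [k1..<8]) [0..<8]"
  by code_simp

lemma percent_combination_nonneg:
  "0 \<le> a + b - c - d \<Longrightarrow> 0 \<le> of_int a / 100 + of_int b / 100 - of_int c / 100 - (of_int d / 100 :: real)"
  by (simp add: add_divide_distrib[symmetric] diff_divide_distrib[symmetric] flip: of_int_add of_int_diff)

interpretation example: unit_grid example_knot 7
proof
  show "example_knot k < example_knot (Suc k)" if "k < 7" for k
    using knot_percent_increasing that by (simp add: list_all_iff example_knot_def)
qed (simp_all add: example_knot_def knot_percent_def)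

lemma example_margins: "example.grid_margins lower_table" "example.grid_margins upper_table"
  using percent_margins
  by (auto simp: example.grid_margins_def list_all_iff lower_table_def upper_table_def
      example_knot_def less_Suc_eq_le)

lemma example_imprecise_copula: "imprecise_copula (example.interp lower_table) (example.interp upper_table)"
proof (rule example.imprecise_copula_interp[OF example_margins])
  show "\<forall>k\<le>7. \<forall>l\<le>7. lower_table k l \<le> upper_table k l"
    using percent_lower_le_upper by (auto simp: list_all_iff lower_table_def upper_table_def less_Suc_eq_le)
  fix k1 k2 l1 l2 :: nat assume "k1 \<le> k2" "k2 \<le> 7" "l1 \<le> l2" "l2 \<le> 7"
  then have "k1 \<in> set [0..<8]" "k2 \<in> set [k1..<8]" "l1 \<in> set [0..<8]" "l2 \<in> set [l1..<8]" by auto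
  with percent_rectangles
  have "let a = (\<lambda>k l. lower_percent ! k ! l); b = (\<lambda>k l. upper_percent ! k ! l) in
     0 \<le> a k1 l1 + b k2 l2 - a k2 l1 - a k1 l2 \<and>
     0 \<le> b k1 l1 + a k2 l2 - a k2 l1 - a k1 l2 \<and>
     0 \<le> b k1 l1 + b k2 l2 - b k2 l1 - a k1 l2 \<and>
     0 \<le> b k1 l1 + b k2 l2 - a k2 l1 - b k1 l2"
    unfolding list_all_iff by blast
  then show "0 \<le> lower_table k1 l1 + upper_table k2 l2 - lower_table k2 l1 - lower_table k1 l2 \<and>
      0 \<le> upper_table k1 l1 + lower_table k2 l2 - lower_table k2 l1 - lower_table k1 l2 \<and>
      0 \<le> upper_table k1 l1 + upper_table k2 l2 - upper_table k2 l1 - lower_table k1 l2 \<and>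
      0 \<le> upper_table k1 l1 + upper_table k2 l2 - lower_table k2 l1 - upper_table k1 l2"
    unfolding lower_table_def upper_table_def Let_def by (intro conjI percent_combination_nonneg; simp)
qed

lemma example_no_copula_between:
  assumes "copula C"
    and "\<forall>x\<in>{0..1}. \<forall>y\<in>{0..1}.
      example.interp lower_table x y \<le> C x y \<and> C x y \<le> example.interp upper_table x y"
  shows False
proof -
  have "0 \<le> example_knot 1" "example_knot 1 \<le> example_knot 2" "example_knot 2 \<le> example_knot 3"
    "example_knot 3 \<le> example_knot 4" "example_knot 4 \<le> example_knot 5"
    "example_knot 5 \<le> example_knot 6" "example_knot 6 \<le> 1"
    by (simp_all add: example_knot_def knot_percent_def)
  from copula_between_two_blocks[OF assms this] show False
    by (simp add: example.interp_knot_margins[OF example_margins(1)]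
        example.interp_knot_margins[OF example_margins(2)] lower_table_def upper_table_def
        lower_percent_def upper_percent_def)
qed

theorem mainTheorem16:
  shows "\<exists>A B. imprecise_copula A B \<and>
           \<not> (\<exists>C. copula C \<and> (\<forall>x\<in>{0..1}. \<forall>y\<in>{0..1}. A x y \<le> C x y \<and> C x y \<le> B x y))"
  using example_imprecise_copula example_no_copula_between by blast

end
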